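(* Let $N>0$, $\beta>0$, $0<\rho<1$, $\sigma>0$, $\gamma>0$ and $0\le\pi_1\le\pi_2\le 1$ be constants, and let $\Delta_1,\Delta_2:[0,\infty)\to[0,\infty)$ be continuous with $\Delta_i(t)\to0$ as $t\to+\infty$ ($i=1,2$). Write $q(t)=\Delta_1(t)\pi_1+\Delta_2(t)(\pi_2-\pi_1)$ and consider $$S'=-\tfrac{\beta}{N}S(1-\rho)I-\tfrac{S}{N}q(t),\quad E'=\tfrac{\beta}{N}S(1-\rho)I-\sigma E,\quad I'=\sigma E-\gamma I,\quad R'=\gamma I,\quad V'=\tfrac{S}{N}q(t),$$ with initial data $S_0,E_0,I_0,R_0,V_0\ge 0$ satisfying $S_0+E_0+I_0+R_0+V_0=N$. Then the solution $(S,E,I,R,V)(t)$ converges as $t\to+\infty$ to a fixed point of the limit system $$S'=-\tfrac{\beta}{N}S(1-\rho)I,\quad E'=\tfrac{\beta}{N}S(1-\rho)I-\sigma E,\quad I'=\sigma E-\gamma I,\quad R'=\gamma I,\quad V'=0,$$ i.e. to a point of the form $(S_\infty,0,0,N-S_\infty-V_\infty,V_\infty)$ with $S_\infty,V_\infty\ge0$, $S_\infty+V_\infty\le N$.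
   Context: SEIR epidemic model with vaccination: $S$ susceptible, $E$ exposed, $I$ infected, $R$ removed, $V$ vaccine-immunized individuals in a population of constant size $N$; $\Delta_1,\Delta_2$ are daily numbers of first and second doses, $\pi_1,\pi_2$ immunity fractions after each dose. $R_0$ denotes the initial value of $R$. *)

theory Defs
  imports Complex_Main
begin

end

(*
  S, E, I stay nonnegative: S solves a scalar linear equation, so S t = S 0 * exp (...), and
  (E, I) solves a cooperative linear system whose coupling coefficient is proportional to S.
  Then R and V increase, S decreases and the total population is conserved, so S, R and V
  converge. Because R' = gamma I with I' bounded, Barbalat's lemma gives I --> 0; in the same
  way (I + R)' = sigma E gives E --> 0, and the limit of R follows from conservation.
*)
theory Submission
  imports Defs "HOL-Analysis.Analysis"
begin

lemma mvt_within:
  fixes f :: "real \<Rightarrow> real"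
  assumes "a \<le> b" and "{a..b} \<subseteq> T"
    and deriv: "\<And>x. x \<in> {a..b} \<Longrightarrow> (f has_real_derivative f' x) (at x within T)"
  shows "\<exists>x\<in>{a..b}. f b - f a = f' x * (b - a)"
proof -
  have "\<exists>x\<in>{a..b}. f b - f a = (\<lambda>h. f' x * h) (b - a)"
  proof (rule mvt_very_simple[OF \<open>a \<le> b\<close>])
    fix x assume "a \<le> x" "x \<le> b"
    with assms have "(f has_real_derivative f' x) (at x within {a..b})"
      by (auto intro: has_field_derivative_subset)
    then show "(f has_derivative (\<lambda>h. f' x * h)) (at x within {a..b})"
      unfolding has_field_derivative_def .
  qed
  then show ?thesis by simp
qed

lemma mono_on_if_deriv_nonneg:
  fixes f :: "real \<Rightarrow> real"
  assumes deriv: "\<And>t. t \<ge> a \<Longrightarrow> (f has_real_derivative f' t) (at t within {a..})"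
    and nonneg: "\<And>t. t \<ge> a \<Longrightarrow> f' t \<ge> 0"
  shows "mono_on {a..} f"
proof (rule mono_onI)
  fix s t assume "s \<in> {a..}" "t \<in> {a..}" "s \<le> t"
  then obtain x where "x \<in> {s..t}" "f t - f s = f' x * (t - s)"
    using mvt_within[of s t "{a..}" f f'] deriv by auto
  moreover have "f' x * (t - s) \<ge> 0"
    using nonneg[of x] \<open>x \<in> {s..t}\<close> \<open>s \<in> {a..}\<close> by simp
  ultimately show "f s \<le> f t" by simp
qed

lemma mono_on_bounded_tendsto_at_top:
  fixes f :: "real \<Rightarrow> real"
  assumes mono: "mono_on {a..} f" and bound: "\<And>t. t \<ge> a \<Longrightarrow> f t \<le> B"
  shows "(f \<longlongrightarrow> (SUP t\<in>{a..}. f t)) at_top"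
proof (rule increasing_tendsto)
  have bdd: "bdd_above (f ` {a..})" using bound by (intro bdd_aboveI) auto
  show "\<forall>\<^sub>F t in at_top. f t \<le> (SUP t\<in>{a..}. f t)"
    using eventually_ge_at_top[of a] by eventually_elim (use bdd in \<open>auto intro: cSUP_upper\<close>)
  fix y assume "y < (SUP t\<in>{a..}. f t)"
  then obtain s where s: "s \<ge> a" "y < f s" using less_cSUP_iff[OF _ bdd] by auto
  show "\<forall>\<^sub>F t in at_top. y < f t"
    using eventually_ge_at_top[of s]
  proof eventually_elim
    fix t assume "s \<le> t"
    with s mono have "f s \<le> f t" by (auto intro: mono_onD)
    with s show "y < f t" by simp
  qed
qed

lemma linear_ode_solution:
  fixes f g :: "real \<Rightarrow> real"
  assumes deriv: "\<And>t. t \<ge> a \<Longrightarrow> (f has_real_derivative g t * f t) (at t within {a..})"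
    and cont: "continuous_on {a..} g" and "t \<ge> a"
  shows "f t = f a * exp (integral {a..t} g)"
proof -
  define G where "G u = integral {a..u} g" for u
  have "\<exists>c. \<forall>u\<in>{a..t}. f u * exp (- G u) = c"
  proof (rule has_field_derivative_zero_constant)
    fix u assume u: "u \<in> {a..t}"
    have "(G has_real_derivative g u) (at u within {a..t})"
      unfolding G_def using continuous_on_subset[OF cont] u by (intro integral_has_real_derivative) auto
    moreover have "(f has_real_derivative g u * f u) (at u within {a..t})"
      using deriv[of u] u by (auto intro: has_field_derivative_subset)
    ultimately have "((\<lambda>u. f u * exp (- G u)) has_real_derivative
        g u * f u * exp (- G u) + f u * (exp (- G u) * - g u)) (at u within {a..t})"
      by (intro derivative_eq_intros) auto
    then show "((\<lambda>u. f u * exp (- G u)) has_real_derivative 0) (at u within {a..t})"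
      by (simp add: algebra_simps)
  qed simp
  then have "f t * exp (- G t) = f a * exp (- G a)" using \<open>t \<ge> a\<close> by fastforce
  then show ?thesis by (simp add: G_def exp_minus field_simps)
qed

lemma barbalat_eventually_less:
  fixes F f f' :: "real \<Rightarrow> real"
  assumes F_deriv: "\<And>t. t \<ge> a \<Longrightarrow> (F has_real_derivative f t) (at t within {a..})"
    and F_lim: "(F \<longlongrightarrow> L) at_top"
    and f_deriv: "\<And>t. t \<ge> a \<Longrightarrow> (f has_real_derivative f' t) (at t within {a..})"
    and f'_bound: "\<And>t. t \<ge> a \<Longrightarrow> \<bar>f' t\<bar> \<le> K" and "e > 0"
  shows "\<forall>\<^sub>F t in at_top. f t < e"
proof -
  have "K \<ge> 0" using f'_bound[of a] by simp
  define d where "d = e / (2 * K + 1)"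
  have "d > 0" using \<open>K \<ge> 0\<close> \<open>e > 0\<close> by (simp add: d_def)
  have "K * d \<le> e / 2" using \<open>K \<ge> 0\<close> \<open>e > 0\<close> by (simp add: d_def field_simps)
  have "\<forall>\<^sub>F t in at_top. dist (F t) L < e * d / 4"
    using F_lim \<open>d > 0\<close> \<open>e > 0\<close> by (intro tendstoD) auto
  then obtain T where T: "\<And>t. t \<ge> T \<Longrightarrow> \<bar>F t - L\<bar> < e * d / 4"
    by (auto simp: eventually_at_top_linorder dist_real_def)
  show ?thesis
    using eventually_ge_at_top[of "max T a"]
  proof eventually_elim
    fix t assume t: "max T a \<le> t"
    show "f t < e"
    proof (rule ccontr)
      assume "\<not> f t < e"
      \<comment> \<open>the bound on f' keeps f above e/2 on [t, t + d], so F grows by at least e d / 2 there\<close>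
      have f_large: "f x \<ge> e / 2" if x: "x \<in> {t..t+d}" for x
      proof -
        obtain z where z: "z \<in> {t..x}" "f x - f t = f' z * (x - t)"
          using mvt_within[of t x "{a..}" f f'] x t f_deriv by auto
        have "\<bar>f x - f t\<bar> = \<bar>f' z\<bar> * (x - t)"
          using z x by (simp add: abs_mult)
        also have "\<dots> \<le> K * d"
          using f'_bound[of z] z(1) t x \<open>K \<ge> 0\<close> by (intro mult_mono) auto
        finally show ?thesis using \<open>\<not> f t < e\<close> \<open>K * d \<le> e / 2\<close> by linarith
      qed
      obtain x where x: "x \<in> {t..t+d}" "F (t + d) - F t = f x * d"
        using mvt_within[of t "t + d" "{a..}" F f] \<open>d > 0\<close> t F_deriv by auto
      have "F (t + d) - F t \<ge> e / 2 * d"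
        using x f_large[of x] \<open>d > 0\<close> by (simp add: mult_right_mono)
      moreover have "\<bar>F (t + d) - L\<bar> < e * d / 4" "\<bar>F t - L\<bar> < e * d / 4"
        using T[of t] T[of "t + d"] t \<open>d > 0\<close> by auto
      ultimately show False by linarith
    qed
  qed
qed

lemma barbalat:
  fixes F f f' :: "real \<Rightarrow> real"
  assumes F_deriv: "\<And>t. t \<ge> a \<Longrightarrow> (F has_real_derivative f t) (at t within {a..})"
    and F_lim: "(F \<longlongrightarrow> L) at_top"
    and f_deriv: "\<And>t. t \<ge> a \<Longrightarrow> (f has_real_derivative f' t) (at t within {a..})"
    and f'_bound: "\<And>t. t \<ge> a \<Longrightarrow> \<bar>f' t\<bar> \<le> K"
  shows "(f \<longlongrightarrow> 0) at_top"
proof (rule tendstoI)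
  fix e :: real assume "e > 0"
  have "\<forall>\<^sub>F t in at_top. f t < e"
    using assms \<open>e > 0\<close> by (rule barbalat_eventually_less)
  moreover have "\<forall>\<^sub>F t in at_top. - f t < e"
    using F_lim f'_bound \<open>e > 0\<close>
    by (intro barbalat_eventually_less[where F = "\<lambda>t. - F t" and f' = "\<lambda>t. - f' t" and a = a and K = K])
      (auto intro: DERIV_minus F_deriv f_deriv tendsto_minus)
  ultimately show "\<forall>\<^sub>F t in at_top. dist (f t) 0 < e"
    by eventually_elim (simp add: dist_real_def)
qed

lemma linear_ode_lower_bound:
  fixes z g :: "real \<Rightarrow> real"
  assumes "a \<le> b"
    and deriv: "\<And>u. u \<in> {a..b} \<Longrightarrow> (z has_real_derivative g u - c * z u) (at u within {a..b})"
    and "c \<ge> 0" "z a \<ge> 0"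
    and g_lower: "\<And>u. u \<in> {a..b} \<Longrightarrow> g u \<ge> - B" and "B \<ge> 0"
  shows "z b \<ge> - (B * (b - a))"
proof -
  define Z where "Z u = z u * exp (c * u)" for u
  have "\<exists>u\<in>{a..b}. Z b - Z a = g u * exp (c * u) * (b - a)"
  proof (rule mvt_within[OF \<open>a \<le> b\<close> order_refl])
    fix u assume "u \<in> {a..b}"
    have "((\<lambda>u. exp (c * u)) has_real_derivative exp (c * u) * c) (at u within {a..b})"
      by (auto intro!: derivative_eq_intros)
    then have "(Z has_real_derivative (g u - c * z u) * exp (c * u) + exp (c * u) * c * z u)
        (at u within {a..b})"
      unfolding Z_def by (rule DERIV_mult[OF deriv[OF \<open>u \<in> {a..b}\<close>]])
    then show "(Z has_real_derivative g u * exp (c * u)) (at u within {a..b})"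
      by (simp add: algebra_simps)
  qed
  then obtain u where u: "u \<in> {a..b}" "Z b - Z a = g u * exp (c * u) * (b - a)" by blast
  have "exp (c * u) * (b - a) \<le> exp (c * b) * (b - a)"
    using u(1) \<open>c \<ge> 0\<close> by (intro mult_right_mono) (auto intro: mult_left_mono)
  then have "B * (exp (c * u) * (b - a)) \<le> B * (exp (c * b) * (b - a))"
    using \<open>B \<ge> 0\<close> by (rule mult_left_mono)
  moreover have "- (B * (exp (c * u) * (b - a))) \<le> g u * (exp (c * u) * (b - a))"
    using mult_right_mono[OF g_lower[OF u(1)], of "exp (c * u) * (b - a)"] u(1) by simp
  moreover have "g u * (exp (c * u) * (b - a)) = Z b - Z a"
    using u(2) by (simp add: mult.assoc)
  moreover have "Z a \<ge> 0" using \<open>z a \<ge> 0\<close> by (simp add: Z_def)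
  ultimately have "- (B * (exp (c * b) * (b - a))) \<le> Z b" by linarith
  then have "- (B * (b - a)) * exp (c * b) \<le> z b * exp (c * b)"
    by (simp add: Z_def algebra_simps)
  then show ?thesis by (rule mult_right_le_imp_le) simp
qed

lemma coupled_ode_lower_bound:
  fixes z w \<beta> :: "real \<Rightarrow> real"
  assumes "{a..b} \<subseteq> T"
    and deriv: "\<And>u. u \<in> {a..b} \<Longrightarrow>
      (z has_real_derivative \<beta> u * w u - c * z u) (at u within T)"
    and "c \<ge> 0" "z a \<ge> 0" and \<beta>_bounds: "\<And>u. u \<in> {a..b} \<Longrightarrow> 0 \<le> \<beta> u \<and> \<beta> u \<le> B"
    and w_lower: "\<And>u. u \<in> {a..b} \<Longrightarrow> w u \<ge> - m" and "m \<ge> 0" and "s \<in> {a..b}"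
  shows "z s \<ge> - (B * m * (b - a))"
proof -
  have "B \<ge> 0" using \<beta>_bounds[OF \<open>s \<in> {a..b}\<close>] by simp
  have "z s \<ge> - (B * m * (s - a))"
  proof (rule linear_ode_lower_bound[where g = "\<lambda>u. \<beta> u * w u" and c = c])
    fix u assume u: "u \<in> {a..s}"
    then have "u \<in> {a..b}" using \<open>s \<in> {a..b}\<close> by auto
    show "(z has_real_derivative \<beta> u * w u - c * z u) (at u within {a..s})"
      by (rule has_field_derivative_subset[OF deriv[OF \<open>u \<in> {a..b}\<close>]])
        (use \<open>s \<in> {a..b}\<close> \<open>{a..b} \<subseteq> T\<close> in auto)
    have "\<beta> u * w u \<ge> \<beta> u * - m"
      using \<beta>_bounds w_lower \<open>u \<in> {a..b}\<close> by (intro mult_left_mono) auto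
    moreover have "\<beta> u * - m \<ge> B * - m"
      using \<beta>_bounds \<open>u \<in> {a..b}\<close> \<open>m \<ge> 0\<close> by (intro mult_right_mono_neg) auto
    ultimately show "\<beta> u * w u \<ge> - (B * m)" by simp
  qed (use \<open>s \<in> {a..b}\<close> \<open>c \<ge> 0\<close> \<open>z a \<ge> 0\<close> \<open>B \<ge> 0\<close> \<open>m \<ge> 0\<close> in auto)
  moreover have "B * m * (s - a) \<le> B * m * (b - a)"
    using \<open>s \<in> {a..b}\<close> \<open>B \<ge> 0\<close> \<open>m \<ge> 0\<close> by (intro mult_left_mono) auto
  ultimately show ?thesis by linarith
qed

lemma cooperative_nonneg_on_short_interval:
  fixes x y \<alpha> :: "real \<Rightarrow> real"
  assumes "a \<le> b" and "{a..b} \<subseteq> T"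
    and x_deriv: "\<And>t. t \<in> {a..b} \<Longrightarrow> (x has_real_derivative \<alpha> t * y t - p * x t) (at t within T)"
    and y_deriv: "\<And>t. t \<in> {a..b} \<Longrightarrow> (y has_real_derivative c * x t - d * y t) (at t within T)"
    and \<alpha>_bounds: "\<And>t. t \<in> {a..b} \<Longrightarrow> 0 \<le> \<alpha> t \<and> \<alpha> t \<le> A"
    and "p \<ge> 0" "c \<ge> 0" "d \<ge> 0" and short: "(A + c) * (b - a) \<le> 1 / 2"
    and "x a \<ge> 0" "y a \<ge> 0"
  shows "x b \<ge> 0 \<and> y b \<ge> 0"
proof -
  define n where "n s = max 0 (max (- x s) (- y s))" for s
  have "continuous_on {a..b} n"
    unfolding n_def using x_deriv y_deriv \<open>{a..b} \<subseteq> T\<close>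
    by (intro continuous_intros DERIV_continuous_on) (auto intro: has_field_derivative_subset)
  then obtain s0 where "s0 \<in> {a..b}" and n_max: "\<And>s. s \<in> {a..b} \<Longrightarrow> n s \<le> n s0"
    using continuous_attains_sup[of "{a..b}" n] \<open>a \<le> b\<close> by auto
  define m where "m = n s0"
  have "m \<ge> 0" by (simp add: m_def n_def)
  have x_ge: "x s \<ge> - m" and y_ge: "y s \<ge> - m" if "s \<in> {a..b}" for s
    using n_max[OF that] by (auto simp: m_def n_def)
  \<comment> \<open>m is the largest negative part of x and y on [a, b]; the interval is so short that
      the equations allow them to reach at most m / 2\<close>
  have "x s0 \<ge> - (A * m * (b - a))"
    using assms x_ge y_ge \<open>m \<ge> 0\<close> \<open>s0 \<in> {a..b}\<close>
    by (intro coupled_ode_lower_bound[where z = x and w = y and \<beta> = \<alpha> and c = p and T = T]) auto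
  moreover have "y s0 \<ge> - (c * m * (b - a))"
    using assms x_ge y_ge \<open>m \<ge> 0\<close> \<open>s0 \<in> {a..b}\<close>
    by (intro coupled_ode_lower_bound[where z = y and w = x and \<beta> = "\<lambda>_. c" and c = d and T = T]) auto
  moreover have "A * (b - a) \<ge> 0" "c * (b - a) \<ge> 0"
    using \<alpha>_bounds[of a] \<open>c \<ge> 0\<close> \<open>a \<le> b\<close> by auto
  then have "A * (b - a) \<le> 1 / 2" "c * (b - a) \<le> 1 / 2"
    using short by (simp_all add: distrib_right)
  then have "m * (A * (b - a)) \<le> m / 2" "m * (c * (b - a)) \<le> m / 2"
    using mult_left_mono[of _ "1 / 2" m] \<open>m \<ge> 0\<close> by auto
  then have "A * m * (b - a) \<le> m / 2" "c * m * (b - a) \<le> m / 2"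
    by (simp_all add: mult_ac)
  ultimately have "m \<le> m / 2"
    using \<open>m \<ge> 0\<close> unfolding m_def n_def by linarith
  then have "m = 0" using \<open>m \<ge> 0\<close> by simp
  then show ?thesis using x_ge y_ge \<open>a \<le> b\<close> by auto
qed

lemma cooperative_nonneg:
  fixes x y \<alpha> :: "real \<Rightarrow> real"
  assumes x_deriv: "\<And>t. t \<ge> a \<Longrightarrow>
      (x has_real_derivative \<alpha> t * y t - p * x t) (at t within {a..})"
    and y_deriv: "\<And>t. t \<ge> a \<Longrightarrow>
      (y has_real_derivative c * x t - d * y t) (at t within {a..})"
    and \<alpha>_cont: "continuous_on {a..} \<alpha>" and \<alpha>_nonneg: "\<And>t. t \<ge> a \<Longrightarrow> \<alpha> t \<ge> 0"
    and "p \<ge> 0" "c \<ge> 0" "d \<ge> 0" and "x a \<ge> 0" "y a \<ge> 0" and "t \<ge> a"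
  shows "x t \<ge> 0 \<and> y t \<ge> 0"
proof -
  obtain u where "u \<in> {a..t}" and \<alpha>_max: "\<And>v. v \<in> {a..t} \<Longrightarrow> \<alpha> v \<le> \<alpha> u"
    using continuous_attains_sup[of "{a..t}" \<alpha>] continuous_on_subset[OF \<alpha>_cont] \<open>t \<ge> a\<close> by auto
  define A where "A = \<alpha> u"
  have "A \<ge> 0" using \<alpha>_nonneg \<open>u \<in> {a..t}\<close> by (simp add: A_def)
  define \<delta> where "\<delta> = 1 / (2 * (A + c) + 1)"
  have "\<delta> > 0" using \<open>A \<ge> 0\<close> \<open>c \<ge> 0\<close> by (simp add: \<delta>_def)
  have "(A + c) * \<delta> \<le> 1 / 2" using \<open>A \<ge> 0\<close> \<open>c \<ge> 0\<close> by (simp add: \<delta>_def field_simps)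
  have steps: "\<forall>s\<in>{a..t}. s \<le> a + real k * \<delta> \<longrightarrow> x s \<ge> 0 \<and> y s \<ge> 0" for k
  proof (induction k)
    case 0
    then show ?case using \<open>x a \<ge> 0\<close> \<open>y a \<ge> 0\<close> by auto
  next
    case (Suc k)
    show ?case
    proof (intro ballI impI)
      fix s assume s: "s \<in> {a..t}" "s \<le> a + real (Suc k) * \<delta>"
      define r where "r = a + real k * \<delta>"
      have "r \<ge> a" using \<open>\<delta> > 0\<close> by (simp add: r_def)
      show "x s \<ge> 0 \<and> y s \<ge> 0"
      proof (cases "s \<le> r")
        case True
        then show ?thesis using Suc.IH s(1) by (simp add: r_def)
      next
        case False
        have "(A + c) * (s - r) \<le> (A + c) * \<delta>"
          using s(2) \<open>A \<ge> 0\<close> \<open>c \<ge> 0\<close> by (intro mult_left_mono) (auto simp: r_def algebra_simps)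
        moreover have "0 \<le> \<alpha> v \<and> \<alpha> v \<le> A" if "v \<in> {r..s}" for v
          using \<alpha>_nonneg \<alpha>_max that \<open>r \<ge> a\<close> s(1) by (auto simp: A_def)
        moreover have "x r \<ge> 0" "y r \<ge> 0"
          using Suc.IH \<open>r \<ge> a\<close> False s(1) by (auto simp: r_def)
        ultimately show ?thesis
          using x_deriv y_deriv \<open>r \<ge> a\<close> False \<open>p \<ge> 0\<close> \<open>c \<ge> 0\<close> \<open>d \<ge> 0\<close> \<open>(A + c) * \<delta> \<le> 1 / 2\<close>
          by (intro cooperative_nonneg_on_short_interval[where x = x and y = y and a = r and b = s
                and T = "{a..}" and \<alpha> = \<alpha> and A = A and p = p and c = c and d = d]) auto
      qed
    qed
  qed
  obtain k where "t - a < real k * \<delta>"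
    using ex_less_of_nat_mult[OF \<open>\<delta> > 0\<close>] by blast
  then show ?thesis using steps[of k] \<open>t \<ge> a\<close> by simp
qed

text \<open>\<open>\<kappa>\<close> stands for the effective transmission rate \<open>\<beta> (1 - \<rho>) / N\<close> and \<open>v\<close> for the
  per-capita vaccination rate \<open>(\<Delta>\<^sub>1 \<pi>\<^sub>1 + \<Delta>\<^sub>2 (\<pi>\<^sub>2 - \<pi>\<^sub>1)) / N\<close>.\<close>

locale seir_vaccination =
  fixes N \<kappa> \<sigma> \<gamma> :: real and v S E I R V :: "real \<Rightarrow> real"
  assumes kappa_nonneg: "\<kappa> \<ge> 0" and sigma_pos: "\<sigma> > 0" and gamma_pos: "\<gamma> > 0"
    and v_cont: "continuous_on {0..} v" and v_nonneg: "\<And>t. t \<ge> 0 \<Longrightarrow> v t \<ge> 0"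
    and init_nonneg: "S 0 \<ge> 0" "E 0 \<ge> 0" "I 0 \<ge> 0" "R 0 \<ge> 0" "V 0 \<ge> 0"
    and init_total: "S 0 + E 0 + I 0 + R 0 + V 0 = N"
    and S_deriv: "\<And>t. t \<ge> 0 \<Longrightarrow>
      (S has_real_derivative - \<kappa> * S t * I t - v t * S t) (at t within {0..})"
    and E_deriv: "\<And>t. t \<ge> 0 \<Longrightarrow>
      (E has_real_derivative \<kappa> * S t * I t - \<sigma> * E t) (at t within {0..})"
    and I_deriv: "\<And>t. t \<ge> 0 \<Longrightarrow>
      (I has_real_derivative \<sigma> * E t - \<gamma> * I t) (at t within {0..})"
    and R_deriv: "\<And>t. t \<ge> 0 \<Longrightarrow> (R has_real_derivative \<gamma> * I t) (at t within {0..})"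
    and V_deriv: "\<And>t. t \<ge> 0 \<Longrightarrow> (V has_real_derivative v t * S t) (at t within {0..})"
begin

lemma S_cont: "continuous_on {0..} S"
  using S_deriv by (intro DERIV_continuous_on) auto

lemma I_cont: "continuous_on {0..} I"
  using I_deriv by (intro DERIV_continuous_on) auto

lemma S_nonneg:
  assumes "t \<ge> 0"
  shows "S t \<ge> 0"
proof -
  have "S t = S 0 * exp (integral {0..t} (\<lambda>u. - (\<kappa> * I u + v u)))"
  proof (rule linear_ode_solution[OF _ _ \<open>t \<ge> 0\<close>])
    show "continuous_on {0..} (\<lambda>u. - (\<kappa> * I u + v u))"
      by (intro continuous_intros I_cont v_cont)
    fix u :: real assume "u \<ge> 0"
    then show "(S has_real_derivative - (\<kappa> * I u + v u) * S u) (at u within {0..})"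
      by (rule DERIV_cong[OF S_deriv]) (simp add: algebra_simps)
  qed
  then show ?thesis using init_nonneg by simp
qed

lemma
  assumes "t \<ge> 0"
  shows E_nonneg: "E t \<ge> 0" and I_nonneg: "I t \<ge> 0"
proof -
  have "continuous_on {0..} (\<lambda>t. \<kappa> * S t)"
    by (intro continuous_intros S_cont)
  then have "E t \<ge> 0 \<and> I t \<ge> 0"
    using E_deriv I_deriv S_nonneg kappa_nonneg sigma_pos gamma_pos init_nonneg \<open>t \<ge> 0\<close>
    by (intro cooperative_nonneg[where x = E and y = I and \<alpha> = "\<lambda>t. \<kappa> * S t"
          and p = \<sigma> and c = \<sigma> and d = \<gamma> and a = 0]) auto
  then show "E t \<ge> 0" "I t \<ge> 0" by simp_all
qed

lemma R_mono: "mono_on {0..} R"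
  by (rule mono_on_if_deriv_nonneg[OF R_deriv]) (use I_nonneg gamma_pos in auto)

lemma V_mono: "mono_on {0..} V"
  by (rule mono_on_if_deriv_nonneg[OF V_deriv]) (use S_nonneg v_nonneg in auto)

lemma minus_S_mono: "mono_on {0..} (\<lambda>t. - S t)"
proof (rule mono_on_if_deriv_nonneg)
  fix t :: real assume "t \<ge> 0"
  show "((\<lambda>t. - S t) has_real_derivative \<kappa> * S t * I t + v t * S t) (at t within {0..})"
    by (rule DERIV_cong[OF DERIV_minus[OF S_deriv[OF \<open>t \<ge> 0\<close>]]]) simp
  show "\<kappa> * S t * I t + v t * S t \<ge> 0"
    using S_nonneg I_nonneg v_nonneg kappa_nonneg \<open>t \<ge> 0\<close> by simp
qed

lemma R_nonneg: "t \<ge> 0 \<Longrightarrow> R t \<ge> 0"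
  using mono_onD[OF R_mono, of 0 t] init_nonneg by auto

lemma V_nonneg: "t \<ge> 0 \<Longrightarrow> V t \<ge> 0"
  using mono_onD[OF V_mono, of 0 t] init_nonneg by auto

lemma population_const:
  assumes "t \<ge> 0"
  shows "S t + E t + I t + R t + V t = N"
proof -
  have "\<exists>c. \<forall>u\<in>{0..}. S u + E u + I u + R u + V u = c"
  proof (rule has_field_derivative_zero_constant)
    fix u :: real assume "u \<in> {0..}"
    then show "((\<lambda>u. S u + E u + I u + R u + V u) has_real_derivative 0) (at u within {0..})"
      by (auto intro!: derivative_eq_intros S_deriv E_deriv I_deriv R_deriv V_deriv)
  qed simp
  then show ?thesis using init_total \<open>t \<ge> 0\<close> by force
qed

lemma
  assumes "t \<ge> 0"
  shows S_le: "S t \<le> N" and E_le: "E t \<le> N" and I_le: "I t \<le> N" and R_le: "R t \<le> N"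
    and V_le: "V t \<le> N" and S_V_le: "S t + V t \<le> N"
  using population_const S_nonneg E_nonneg I_nonneg R_nonneg V_nonneg assms by fastforce+

lemma S_convergent: "\<exists>L. (S \<longlongrightarrow> L) at_top"
proof -
  have "((\<lambda>t. - S t) \<longlongrightarrow> (SUP t\<in>{0..}. - S t)) at_top"
    using minus_S_mono S_nonneg by (intro mono_on_bounded_tendsto_at_top[where B = 0]) auto
  then have "(S \<longlongrightarrow> - (SUP t\<in>{0..}. - S t)) at_top"
    by (auto dest: tendsto_minus)
  then show ?thesis ..
qed

lemma V_convergent: "\<exists>L. (V \<longlongrightarrow> L) at_top"
  using mono_on_bounded_tendsto_at_top[OF V_mono V_le] by blast

lemma R_convergent: "\<exists>L. (R \<longlongrightarrow> L) at_top"
  using mono_on_bounded_tendsto_at_top[OF R_mono R_le] by blast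

lemma I_tendsto_zero: "(I \<longlongrightarrow> 0) at_top"
proof -
  obtain L where "(R \<longlongrightarrow> L) at_top" using R_convergent ..
  show ?thesis
  proof (rule barbalat[where F = "\<lambda>t. R t / \<gamma>" and f' = "\<lambda>t. \<sigma> * E t - \<gamma> * I t"
        and K = "\<sigma> * N + \<gamma> * N" and a = 0])
    show "((\<lambda>t. R t / \<gamma>) \<longlongrightarrow> L / \<gamma>) at_top"
      using gamma_pos by (intro tendsto_intros \<open>(R \<longlongrightarrow> L) at_top\<close>) auto
    fix t :: real assume "t \<ge> 0"
    show "((\<lambda>t. R t / \<gamma>) has_real_derivative I t) (at t within {0..})"
      using gamma_pos by (auto intro!: derivative_eq_intros R_deriv[OF \<open>t \<ge> 0\<close>])
    show "(I has_real_derivative \<sigma> * E t - \<gamma> * I t) (at t within {0..})"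
      using I_deriv \<open>t \<ge> 0\<close> .
    have "\<sigma> * E t \<le> \<sigma> * N" "\<gamma> * I t \<le> \<gamma> * N"
      using E_le I_le \<open>t \<ge> 0\<close> sigma_pos gamma_pos by simp_all
    moreover have "\<sigma> * E t \<ge> 0" "\<gamma> * I t \<ge> 0"
      using E_nonneg I_nonneg \<open>t \<ge> 0\<close> sigma_pos gamma_pos by simp_all
    ultimately show "\<bar>\<sigma> * E t - \<gamma> * I t\<bar> \<le> \<sigma> * N + \<gamma> * N" by linarith
  qed
qed

lemma E_tendsto_zero: "(E \<longlongrightarrow> 0) at_top"
proof -
  obtain L where "(R \<longlongrightarrow> L) at_top" using R_convergent ..
  show ?thesis
  proof (rule barbalat[where F = "\<lambda>t. (I t + R t) / \<sigma>" and f' = "\<lambda>t. \<kappa> * S t * I t - \<sigma> * E t"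
        and K = "\<kappa> * N * N + \<sigma> * N" and a = 0])
    show "((\<lambda>t. (I t + R t) / \<sigma>) \<longlongrightarrow> (0 + L) / \<sigma>) at_top"
      using sigma_pos by (intro tendsto_intros I_tendsto_zero \<open>(R \<longlongrightarrow> L) at_top\<close>) auto
    fix t :: real assume "t \<ge> 0"
    show "((\<lambda>t. (I t + R t) / \<sigma>) has_real_derivative E t) (at t within {0..})"
      using sigma_pos
      by (auto intro!: derivative_eq_intros I_deriv[OF \<open>t \<ge> 0\<close>] R_deriv[OF \<open>t \<ge> 0\<close>])
    show "(E has_real_derivative \<kappa> * S t * I t - \<sigma> * E t) (at t within {0..})"
      using E_deriv \<open>t \<ge> 0\<close> .
    have "N \<ge> 0" using init_total init_nonneg by linarith
    then have "\<kappa> * S t * I t \<le> \<kappa> * N * N"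
      using S_nonneg S_le I_nonneg I_le \<open>t \<ge> 0\<close> kappa_nonneg
      by (intro mult_mono) (auto intro: mult_left_mono)
    moreover have "\<sigma> * E t \<le> \<sigma> * N"
      using E_le \<open>t \<ge> 0\<close> sigma_pos by simp
    moreover have "\<kappa> * S t * I t \<ge> 0" "\<sigma> * E t \<ge> 0"
      using S_nonneg I_nonneg E_nonneg \<open>t \<ge> 0\<close> kappa_nonneg sigma_pos by simp_all
    ultimately show "\<bar>\<kappa> * S t * I t - \<sigma> * E t\<bar> \<le> \<kappa> * N * N + \<sigma> * N" by linarith
  qed
qed

theorem converges_to_disease_free_state:
  "\<exists>S_inf V_inf. S_inf \<ge> 0 \<and> V_inf \<ge> 0 \<and> S_inf + V_inf \<le> N
     \<and> (S \<longlongrightarrow> S_inf) at_top \<and> (E \<longlongrightarrow> 0) at_top \<and> (I \<longlongrightarrow> 0) at_top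
     \<and> (R \<longlongrightarrow> N - S_inf - V_inf) at_top \<and> (V \<longlongrightarrow> V_inf) at_top"
proof -
  obtain S_inf V_inf where S_lim: "(S \<longlongrightarrow> S_inf) at_top" and V_lim: "(V \<longlongrightarrow> V_inf) at_top"
    using S_convergent V_convergent by blast
  have ev_bounds: "\<forall>\<^sub>F t in at_top. S t \<ge> 0 \<and> V t \<ge> 0 \<and> S t + V t \<le> N"
    using eventually_ge_at_top[of 0] by eventually_elim (simp add: S_nonneg V_nonneg S_V_le)
  have "S_inf \<ge> 0"
    using ev_bounds by (intro tendsto_lowerbound[OF S_lim]) (auto elim: eventually_mono)
  moreover have "V_inf \<ge> 0"
    using ev_bounds by (intro tendsto_lowerbound[OF V_lim]) (auto elim: eventually_mono)
  moreover have "S_inf + V_inf \<le> N"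
    using ev_bounds
    by (intro tendsto_upperbound[OF tendsto_add[OF S_lim V_lim]]) (auto elim: eventually_mono)
  moreover have "(R \<longlongrightarrow> N - S_inf - V_inf) at_top"
  proof -
    have "((\<lambda>t. N - S t - E t - I t - V t) \<longlongrightarrow> N - S_inf - 0 - 0 - V_inf) at_top"
      by (intro tendsto_intros S_lim E_tendsto_zero I_tendsto_zero V_lim)
    moreover have "\<forall>\<^sub>F t in at_top. N - S t - E t - I t - V t = R t"
      using eventually_ge_at_top[of 0] by eventually_elim (use population_const in fastforce)
    ultimately show ?thesis by (simp add: tendsto_cong)
  qed
  ultimately show ?thesis using S_lim V_lim E_tendsto_zero I_tendsto_zero by blast
qed

end

theorem mainTheorem2:
  fixes N \<beta> \<rho> \<sigma> \<gamma> \<pi>1 \<pi>2 :: real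
    and \<Delta>1 \<Delta>2 :: "real \<Rightarrow> real"
    and S E I R V :: "real \<Rightarrow> real"
  assumes N_pos: "N > 0" and beta_pos: "\<beta> > 0"
    and rho: "0 < \<rho>" "\<rho> < 1"
    and sigma_pos: "\<sigma> > 0" and gamma_pos: "\<gamma> > 0"
    and pi: "0 \<le> \<pi>1" "\<pi>1 \<le> \<pi>2" "\<pi>2 \<le> 1"
    and D1_cont: "continuous_on {0..} \<Delta>1" and D2_cont: "continuous_on {0..} \<Delta>2"
    and D1_nonneg: "\<And>t. t \<ge> 0 \<Longrightarrow> \<Delta>1 t \<ge> 0"
    and D2_nonneg: "\<And>t. t \<ge> 0 \<Longrightarrow> \<Delta>2 t \<ge> 0"
    and D1_lim: "(\<Delta>1 \<longlongrightarrow> 0) at_top" and D2_lim: "(\<Delta>2 \<longlongrightarrow> 0) at_top"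
    and init_nonneg: "S 0 \<ge> 0" "E 0 \<ge> 0" "I 0 \<ge> 0" "R 0 \<ge> 0" "V 0 \<ge> 0"
    and init_sum: "S 0 + E 0 + I 0 + R 0 + V 0 = N"
    and S_ode: "\<And>t. t \<ge> 0 \<Longrightarrow> (S has_real_derivative
        (- \<beta> / N * S t * (1 - \<rho>) * I t - S t / N * (\<Delta>1 t * \<pi>1 + \<Delta>2 t * (\<pi>2 - \<pi>1))))
        (at t within {0..})"
    and E_ode: "\<And>t. t \<ge> 0 \<Longrightarrow> (E has_real_derivative
        (\<beta> / N * S t * (1 - \<rho>) * I t - \<sigma> * E t)) (at t within {0..})"
    and I_ode: "\<And>t. t \<ge> 0 \<Longrightarrow> (I has_real_derivative (\<sigma> * E t - \<gamma> * I t)) (at t within {0..})"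
    and R_ode: "\<And>t. t \<ge> 0 \<Longrightarrow> (R has_real_derivative (\<gamma> * I t)) (at t within {0..})"
    and V_ode: "\<And>t. t \<ge> 0 \<Longrightarrow> (V has_real_derivative
        (S t / N * (\<Delta>1 t * \<pi>1 + \<Delta>2 t * (\<pi>2 - \<pi>1)))) (at t within {0..})"
  shows "\<exists>S_inf V_inf. S_inf \<ge> 0 \<and> V_inf \<ge> 0 \<and> S_inf + V_inf \<le> N
     \<and> (S \<longlongrightarrow> S_inf) at_top \<and> (E \<longlongrightarrow> 0) at_top \<and> (I \<longlongrightarrow> 0) at_top
     \<and> (R \<longlongrightarrow> N - S_inf - V_inf) at_top \<and> (V \<longlongrightarrow> V_inf) at_top"
proof -
  define q where "q t = \<Delta>1 t * \<pi>1 + \<Delta>2 t * (\<pi>2 - \<pi>1)" for t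
  interpret seir_vaccination N "\<beta> / N * (1 - \<rho>)" \<sigma> \<gamma> "\<lambda>t. q t / N" S E I R V
  proof
    show "continuous_on {0..} (\<lambda>t. q t / N)"
      unfolding q_def by (intro continuous_intros D1_cont D2_cont) (use N_pos in auto)
    fix t :: real assume "t \<ge> 0"
    show "q t / N \<ge> 0"
      using D1_nonneg[OF \<open>t \<ge> 0\<close>] D2_nonneg[OF \<open>t \<ge> 0\<close>] pi N_pos by (simp add: q_def)
    show "(S has_real_derivative - (\<beta> / N * (1 - \<rho>)) * S t * I t - q t / N * S t) (at t within {0..})"
      by (rule DERIV_cong[OF S_ode[OF \<open>t \<ge> 0\<close>]]) (simp add: q_def field_simps)
    show "(E has_real_derivative \<beta> / N * (1 - \<rho>) * S t * I t - \<sigma> * E t) (at t within {0..})"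
      by (rule DERIV_cong[OF E_ode[OF \<open>t \<ge> 0\<close>]]) (simp add: algebra_simps)
    show "(V has_real_derivative q t / N * S t) (at t within {0..})"
      by (rule DERIV_cong[OF V_ode[OF \<open>t \<ge> 0\<close>]]) (simp add: q_def)
  qed (use beta_pos N_pos rho sigma_pos gamma_pos init_nonneg init_sum I_ode R_ode in auto)
  show ?thesis by (rule converges_to_disease_free_state)
qed

end
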